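(* For every positive integer $n$: (a) $\displaystyle nN^p(n)=\sum_{k=1}^{n-1}N^p(k)\sigma(n-k)+\sum_{t=1}^{n}t\,\tau(t)\,p(n-t)$; (b) $\displaystyle nN^q(n)=\sum_{k=1}^{n-1}N^q(k)\sigma^s(n-k)+\sum_{t=1}^{n}t\,\tau^s(t)\,q(n-t)$; (c) $\displaystyle nN^p_{bin}(n)=\sum_{k=1}^{n-1}N^p_{bin}(k)\big(2^{\vartheta_2(n-k)+1}-1\big)+\sum_{t=1}^{n}t\big(\vartheta_2(t)+1\big)b(n-t)$.
   Context: $N^p(n)$ (resp. $N^q(n)$) is the total number of parts, summed over all partitions (resp. partitions into distinct parts) of $n$; $p(m)$, $q(m)$ are the numbers of partitions and of partitions into distinct parts of $m$, with $p(0)=q(0)=1$. $\tau(m)$ is the number of positive divisors of $m$, $\sigma(m)$ their sum, $\tau^s(m)=\sum_{d\mid m}(-1)^{m/d-1}$, $\sigma^s(m)=\sum_{d\mid m}(-1)^{m/d-1}d$. A binary partition is a partition whose parts are powers of $2$ (including $1$); $b(m)$ is the number of binary partitions of $m$ with $b(0)=1$, and $N^p_{bin}(m)$ is the total number of parts over all binary partitions of $m$. $\vartheta_2$ is the $2$-adic valuation. *)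

theory Defs
  imports Main "HOL-Library.Multiset" "HOL-Computational_Algebra.Primes"
begin

definition partitions :: "nat \<Rightarrow> nat multiset set" where
  "partitions n = {M. (\<forall>x\<in>#M. 0 < x) \<and> sum_mset M = n}"

definition dist_partitions :: "nat \<Rightarrow> nat multiset set" where
  "dist_partitions n = {M \<in> partitions n. \<forall>x. count M x \<le> 1}"

definition bin_partitions :: "nat \<Rightarrow> nat multiset set" where
  "bin_partitions n = {M \<in> partitions n. \<forall>x\<in>#M. \<exists>k. x = 2 ^ k}"

definition p :: "nat \<Rightarrow> nat" where "p n = card (partitions n)"
definition q :: "nat \<Rightarrow> nat" where "q n = card (dist_partitions n)"
definition b :: "nat \<Rightarrow> nat" where "b n = card (bin_partitions n)"

definition Np :: "nat \<Rightarrow> nat" where "Np n = (\<Sum>M\<in>partitions n. size M)"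
definition Nq :: "nat \<Rightarrow> nat" where "Nq n = (\<Sum>M\<in>dist_partitions n. size M)"
definition Np_bin :: "nat \<Rightarrow> nat" where "Np_bin n = (\<Sum>M\<in>bin_partitions n. size M)"

definition divisors :: "nat \<Rightarrow> nat set" where
  "divisors m = {d \<in> {1..m}. d dvd m}"

definition tau :: "nat \<Rightarrow> int" where "tau m = int (card (divisors m))"
definition sigma :: "nat \<Rightarrow> int" where "sigma m = (\<Sum>d\<in>divisors m. int d)"
definition tau_s :: "nat \<Rightarrow> int" where
  "tau_s m = (\<Sum>d\<in>divisors m. (-1) ^ (m div d - 1))"
definition sigma_s :: "nat \<Rightarrow> int" where
  "sigma_s m = (\<Sum>d\<in>divisors m. (-1) ^ (m div d - 1) * int d)"

definition v2 :: "nat \<Rightarrow> nat" where "v2 m = multiplicity (2::nat) m"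

end

theory Submission
  imports Defs
begin

text \<open>
  For a partition \<open>M\<close> of \<open>n\<close> with \<open>c\<^sub>j(M)\<close> copies of the part \<open>j\<close> we have
  \<open>n = \<Sum>\<^sub>j j c\<^sub>j(M)\<close>, so \<open>n N(n) = \<Sum>\<^sub>j j \<Sum>\<^sub>M c\<^sub>j(M) |M|\<close>. Counting \<open>c\<^sub>j(M)\<close> as the number
  of \<open>m \<ge> 1\<close> such that \<open>M\<close> contains \<open>m\<close> copies of \<open>j\<close>, and removing these \<open>m\<close> copies,
  turns the inner sum into \<open>\<Sum>\<^sub>m (N(n - mj) + m p(n - mj))\<close>; collecting the pairs \<open>(j, m)\<close>
  with \<open>jm = k\<close> produces the divisor sums. This works for parts from any set \<open>S\<close>, which
  covers ordinary and binary partitions. For distinct parts, \<open>c\<^sub>j(M) \<le> 1\<close>, and removing the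
  part \<open>j\<close> maps the partitions containing \<open>j\<close> onto the partitions of \<open>n - j\<close> not containing
  it; iterating this inclusion-exclusion yields the signs \<open>(-1)^(m-1)\<close>.
\<close>

lemma sum_divisor_pairs:
  fixes f :: "nat \<Rightarrow> nat \<Rightarrow> 'a::comm_monoid_add"
  shows "(\<Sum>j=1..n. \<Sum>m=1..n div j. f j m) = (\<Sum>k=1..n. \<Sum>d\<in>divisors k. f d (k div d))"
proof -
  have "(\<Sum>j=1..n. \<Sum>m=1..n div j. f j m) = (\<Sum>(j, m)\<in>(SIGMA j:{1..n}. {1..n div j}). f j m)"
    by (rule sum.Sigma) auto
  also have "\<dots> = (\<Sum>(k, d)\<in>(SIGMA k:{1..n}. divisors k). f d (k div d))"
    by (rule sum.reindex_bij_witness[of _ "\<lambda>(k, d). (d, k div d)" "\<lambda>(j, m). (j * m, j)"])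
      (auto simp: divisors_def less_eq_div_iff_mult_less_eq div_le_mono mult.commute
        dest: dvd_imp_le)
  also have "\<dots> = (\<Sum>k=1..n. \<Sum>d\<in>divisors k. f d (k div d))"
    by (rule sum.Sigma[symmetric]) (auto simp: divisors_def)
  finally show ?thesis .
qed

lemma sum_convolution_reflect:
  fixes s N :: "nat \<Rightarrow> 'a::comm_semiring_0"
  assumes "N 0 = 0"
  shows "(\<Sum>k=1..n. s k * N (n - k)) = (\<Sum>k=1..n-1. N k * s (n - k))"
proof (cases n)
  case (Suc n')
  have "(\<Sum>k=1..n. s k * N (n - k)) = (\<Sum>k=1..n'. s k * N (n - k))"
    using assms by (simp add: Suc sum.cl_ivl_Suc)
  also have "\<dots> = (\<Sum>k=1..n'. N k * s (n - k))"
    by (rule sum.reindex_bij_witness[of _ "\<lambda>k. n - k" "\<lambda>k. n - k"]) (auto simp: Suc mult.commute)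
  finally show ?thesis
    by (simp add: Suc)
qed simp

lemma sum_mset_eq_sum_count:
  fixes M :: "'a::comm_semiring_1 multiset"
  assumes "finite A" "set_mset M \<subseteq> A"
  shows "sum_mset M = (\<Sum>x\<in>A. of_nat (count M x) * x)"
  using assms(2)
proof (induction M)
  case (add y M)
  then have "(\<Sum>x\<in>A. of_nat (count (add_mset y M) x) * x)
      = (\<Sum>x\<in>A. of_nat (count M x) * x + (if x = y then y else 0))"
    by (intro sum.cong) (auto simp: algebra_simps)
  also have "\<dots> = (\<Sum>x\<in>A. of_nat (count M x) * x) + y"
    using assms(1) add.prems by (simp add: sum.distrib)
  finally show ?case
    using add by (simp add: add.commute)
qed simp

lemma mult_count_le_sum_mset:
  fixes M :: "nat multiset"
  shows "x * count M x \<le> sum_mset M"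
proof -
  have "replicate_mset (count M x) x \<subseteq># M"
    by (simp flip: count_le_replicate_mset_subset_eq)
  then obtain N where "M = replicate_mset (count M x) x + N"
    by (auto simp: subset_mset.le_iff_add)
  then have "sum_mset M = count M x * x + sum_mset N"
    by (metis sum_mset.union sum_mset_replicate_mset of_nat_id)
  then show ?thesis
    by simp
qed

lemma member_le_sum_mset:
  fixes M :: "nat multiset"
  assumes "x \<in># M"
  shows "x \<le> sum_mset M"
proof -
  have "x \<le> x * count M x"
    using assms by simp
  also have "\<dots> \<le> sum_mset M"
    by (rule mult_count_le_sum_mset)
  finally show ?thesis .
qed

lemma size_le_sum_mset:
  fixes M :: "nat multiset"
  assumes "0 \<notin># M"
  shows "size M \<le> sum_mset M"
proof -
  have "size M = (\<Sum>x\<in>#M. 1)"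
    by (rule size_eq_sum_mset)
  also have "\<dots> \<le> (\<Sum>x\<in>#M. x)"
    using assms by (intro sum_mset_mono) (auto simp: Suc_le_eq intro!: gr0I)
  finally show ?thesis
    by simp
qed

lemma mult_sum_size_eq_sum_count:
  assumes "\<And>M. M \<in> P \<Longrightarrow> set_mset M \<subseteq> {1..n} \<and> sum_mset M = n"
  shows "n * (\<Sum>M\<in>P. size M) = (\<Sum>j=1..n. j * (\<Sum>M\<in>P. count M j * size M))"
proof -
  have "n * size M = (\<Sum>j=1..n. j * (count M j * size M))" if "M \<in> P" for M
  proof -
    have "n = (\<Sum>j=1..n. count M j * j)"
      using assms[OF that] sum_mset_eq_sum_count[of "{1..n}" M] by simp
    then have "n * size M = (\<Sum>j=1..n. count M j * j) * size M"
      by (rule arg_cong)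
    also have "\<dots> = (\<Sum>j=1..n. j * (count M j * size M))"
      by (simp add: sum_distrib_left sum_distrib_right mult_ac)
    finally show ?thesis .
  qed
  then show ?thesis
    by (simp add: sum_distrib_left sum.swap[of _ P])
qed

definition restricted_partitions :: "nat set \<Rightarrow> nat \<Rightarrow> nat multiset set" where
  "restricted_partitions S n = {M. set_mset M \<subseteq> S \<and> sum_mset M = n}"

definition total_parts :: "nat set \<Rightarrow> nat \<Rightarrow> nat" where
  "total_parts S n = (\<Sum>M\<in>restricted_partitions S n. size M)"

lemma partitions_eq_restricted_partitions: "partitions n = restricted_partitions {0<..} n"
  by (auto simp: partitions_def restricted_partitions_def)

lemma bin_partitions_eq_restricted_partitions:
  "bin_partitions n = restricted_partitions (range ((^) 2)) n"
  by (auto simp: bin_partitions_def partitions_def restricted_partitions_def)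

lemma restricted_partition_parts_bounded:
  assumes "0 \<notin> S" "M \<in> restricted_partitions S n"
  shows "set_mset M \<subseteq> {1..n}"
proof
  fix x
  assume "x \<in># M"
  with assms show "x \<in> {1..n}"
    using member_le_sum_mset[of x M] by (auto simp: restricted_partitions_def Suc_le_eq intro: gr0I)
qed

lemma finite_restricted_partitions:
  assumes "0 \<notin> S"
  shows "finite (restricted_partitions S n)"
proof (rule finite_subset)
  show "restricted_partitions S n \<subseteq> (\<Union>s\<le>n. multisets_of_size {1..n} s)"
  proof
    fix M
    assume M: "M \<in> restricted_partitions S n"
    then have "size M \<le> n"
      using assms size_le_sum_mset[of M] by (auto simp: restricted_partitions_def)
    with restricted_partition_parts_bounded[OF assms M]
    show "M \<in> (\<Union>s\<le>n. multisets_of_size {1..n} s)"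
      by (auto simp: multisets_of_size_def)
  qed
qed auto

lemma total_parts_0:
  assumes "0 \<notin> S"
  shows "total_parts S 0 = 0"
  using restricted_partition_parts_bounded[OF assms, of _ 0]
  by (auto simp: total_parts_def intro!: sum.neutral)

lemma bij_betw_add_copies_restricted_partitions:
  assumes "j \<in> S"
  shows "bij_betw (\<lambda>M. M + replicate_mset m j) (restricted_partitions S n)
           {M \<in> restricted_partitions S (n + m * j). m \<le> count M j}"
proof (rule bij_betw_byWitness[where f' = "\<lambda>M. M - replicate_mset m j"])
  show "(\<lambda>M. M + replicate_mset m j) ` restricted_partitions S n
      \<subseteq> {M \<in> restricted_partitions S (n + m * j). m \<le> count M j}"
    using assms by (auto simp: restricted_partitions_def split: if_splits)
  show "(\<lambda>M. M - replicate_mset m j) ` {M \<in> restricted_partitions S (n + m * j). m \<le> count M j}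
      \<subseteq> restricted_partitions S n"
    by (auto simp: restricted_partitions_def sum_mset_diff count_le_replicate_mset_subset_eq
        dest: in_diffD)
qed (auto simp flip: count_le_replicate_mset_subset_eq)

lemma sum_count_size_restricted_partitions:
  assumes "0 \<notin> S" "j \<in> S"
  shows "(\<Sum>M\<in>restricted_partitions S n. count M j * size M) =
    (\<Sum>m=1..n div j. total_parts S (n - m * j) + m * card (restricted_partitions S (n - m * j)))"
proof -
  have j: "0 < j"
    using assms by (auto intro!: gr0I)
  have count_as_sum: "count M j * size M = (\<Sum>m=1..n div j. if m \<le> count M j then size M else 0)"
    if "M \<in> restricted_partitions S n" for M
  proof -
    have "j * count M j \<le> n"
      using that mult_count_le_sum_mset[of j M] by (simp add: restricted_partitions_def)
    then have "count M j \<le> n div j"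
      using j by (simp add: less_eq_div_iff_mult_less_eq mult.commute)
    then have "{m \<in> {1..n div j}. m \<le> count M j} = {1..count M j}"
      by auto
    then show ?thesis
      by (simp flip: sum.inter_filter)
  qed
  have "(\<Sum>M\<in>restricted_partitions S n. count M j * size M)
      = (\<Sum>M\<in>restricted_partitions S n. \<Sum>m=1..n div j. if m \<le> count M j then size M else 0)"
    using count_as_sum by (rule sum.cong[OF refl])
  also have "\<dots> = (\<Sum>m=1..n div j. \<Sum>M\<in>restricted_partitions S n. if m \<le> count M j then size M else 0)"
    by (rule sum.swap)
  also have "\<dots> = (\<Sum>m=1..n div j. \<Sum>M\<in>{M \<in> restricted_partitions S n. m \<le> count M j}. size M)"
    using finite_restricted_partitions[OF assms(1)] by (simp add: sum.inter_filter)
  also have "\<dots> = (\<Sum>m=1..n div j. \<Sum>M\<in>restricted_partitions S (n - m * j). size M + m)"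
  proof (rule sum.cong[OF refl])
    fix m
    assume "m \<in> {1..n div j}"
    then have "n = (n - m * j) + m * j"
      using j by (simp add: less_eq_div_iff_mult_less_eq)
    then show "(\<Sum>M\<in>{M \<in> restricted_partitions S n. m \<le> count M j}. size M)
        = (\<Sum>M\<in>restricted_partitions S (n - m * j). size M + m)"
      using sum.reindex_bij_betw[OF bij_betw_add_copies_restricted_partitions[OF assms(2),
            of m "n - m * j"], of size]
      by simp
  qed
  finally show ?thesis
    by (simp add: sum.distrib total_parts_def mult.commute)
qed

lemma total_parts_recurrence:
  assumes "0 \<notin> S"
  shows "n * total_parts S n =
    (\<Sum>k=1..n-1. total_parts S k * (\<Sum>d\<in>divisors (n - k) \<inter> S. d))
    + (\<Sum>t=1..n. t * card (divisors t \<inter> S) * card (restricted_partitions S (n - t)))"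
proof -
  let ?T = "total_parts S" and ?c = "\<lambda>r. card (restricted_partitions S r)"
  have "n * ?T n = (\<Sum>j=1..n. j * (\<Sum>M\<in>restricted_partitions S n. count M j * size M))"
    unfolding total_parts_def
    using restricted_partition_parts_bounded[OF assms]
    by (intro mult_sum_size_eq_sum_count) (auto simp: restricted_partitions_def)
  also have "\<dots> = (\<Sum>j=1..n. \<Sum>m=1..n div j.
      if j \<in> S then j * (?T (n - m * j) + m * ?c (n - m * j)) else 0)"
  proof (rule sum.cong[OF refl])
    fix j
    show "j * (\<Sum>M\<in>restricted_partitions S n. count M j * size M) = (\<Sum>m=1..n div j.
        if j \<in> S then j * (?T (n - m * j) + m * ?c (n - m * j)) else 0)"
    proof (cases "j \<in> S")
      case True
      then show ?thesis
        by (simp add: sum_count_size_restricted_partitions[OF assms] sum_distrib_left)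
    next
      case False
      then have "count M j = 0" if "M \<in> restricted_partitions S n" for M
        using that by (auto simp: restricted_partitions_def count_eq_zero_iff)
      with False show ?thesis
        by simp
    qed
  qed
  also have "\<dots> = (\<Sum>k=1..n. \<Sum>d\<in>divisors k. if d \<in> S then d * ?T (n - k) + k * ?c (n - k) else 0)"
    unfolding sum_divisor_pairs
    by (intro sum.cong refl) (auto simp: divisors_def algebra_simps)
  also have "\<dots> = (\<Sum>k=1..n. (\<Sum>d\<in>divisors k \<inter> S. d) * ?T (n - k)
      + k * card (divisors k \<inter> S) * ?c (n - k))"
    by (simp add: sum.inter_restrict[symmetric] divisors_def sum.distrib sum_distrib_right)
      (simp add: mult_ac)
  also have "\<dots> = (\<Sum>k=1..n-1. ?T k * (\<Sum>d\<in>divisors (n - k) \<inter> S. d))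
      + (\<Sum>t=1..n. t * card (divisors t \<inter> S) * ?c (n - t))"
    using sum_convolution_reflect[where N = ?T and s = "\<lambda>k. \<Sum>d\<in>divisors k \<inter> S. d"]
    by (simp add: sum.distrib total_parts_0[OF assms])
  finally show ?thesis .
qed

lemma finite_dist_partitions: "finite (dist_partitions n)"
  using finite_restricted_partitions[of "{0<..}" n]
  by (rule finite_subset[rotated]) (auto simp: dist_partitions_def partitions_eq_restricted_partitions)

lemma bij_betw_add_part_dist_partitions:
  assumes "0 < j"
  shows "bij_betw (add_mset j) {M \<in> dist_partitions n. j \<notin># M} {M \<in> dist_partitions (n + j). j \<in># M}"
proof (rule bij_betw_byWitness[where f' = "\<lambda>M. M - {#j#}"])
  show "add_mset j ` {M \<in> dist_partitions n. j \<notin># M} \<subseteq> {M \<in> dist_partitions (n + j). j \<in># M}"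
    using assms by (auto simp: dist_partitions_def partitions_def not_in_iff)
  show "(\<lambda>M. M - {#j#}) ` {M \<in> dist_partitions (n + j). j \<in># M} \<subseteq> {M \<in> dist_partitions n. j \<notin># M}"
    by (auto simp: dist_partitions_def partitions_def sum_mset_diff not_in_iff dest: in_diffD)
qed auto

lemma sum_dist_partitions_containing:
  fixes g :: "nat \<Rightarrow> 'a::comm_ring_1"
  assumes "0 < j"
  shows "(\<Sum>M\<in>{M \<in> dist_partitions n. j \<in># M}. g (size M)) =
    (\<Sum>m=1..n div j. (-1) ^ (m - 1) * (\<Sum>M\<in>dist_partitions (n - m * j). g (size M + m)))"
proof (induction n arbitrary: g rule: less_induct)
  \<comment> \<open>Generalising over \<open>g\<close> lets the induction hypothesis, applied to \<open>\<lambda>s. g (s + 1)\<close>,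
    account for the removed part.\<close>
  case (less n)
  show ?case
  proof (cases "n < j")
    case True
    then have none: "{M \<in> dist_partitions n. j \<in># M} = {}"
      using member_le_sum_mset[of j] by (force simp: dist_partitions_def partitions_def)
    show ?thesis
      using True by (simp add: none)
  next
    case False
    define r where "r = n - j"
    have n: "n = r + j" and "r < n"
      using False assms by (auto simp: r_def)
    let ?D = dist_partitions
    have split_first: "(\<Sum>m=1..Suc K. F m) = F 1 + (\<Sum>m=1..K. F (Suc m))" for K and F :: "nat \<Rightarrow> 'a"
      by (induction K) (simp_all add: add.assoc)
    have "n div j = Suc (r div j)"
      using assms by (simp add: n div_add_self2)
    have "(\<Sum>M\<in>{M \<in> ?D n. j \<in># M}. g (size M)) = (\<Sum>M\<in>{M \<in> ?D r. j \<notin># M}. g (size M + 1))"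
      using sum.reindex_bij_betw[OF bij_betw_add_part_dist_partitions[OF assms, of r],
          of "\<lambda>M. g (size M)"]
      by (simp add: n)
    also have "\<dots> = (\<Sum>M\<in>?D r. g (size M + 1)) - (\<Sum>M\<in>{M \<in> ?D r. j \<in># M}. g (size M + 1))"
      using sum.Int_Diff[OF finite_dist_partitions, of "\<lambda>M. g (size M + 1)" r "{M. j \<in># M}"]
      by (simp add: Int_def set_diff_eq)
    also have "(\<Sum>M\<in>{M \<in> ?D r. j \<in># M}. g (size M + 1))
        = (\<Sum>m=1..r div j. (-1) ^ (m - 1) * (\<Sum>M\<in>?D (r - m * j). g (size M + Suc m)))"
      using less.IH[OF \<open>r < n\<close>, of "\<lambda>s. g (s + 1)"] by simp
    also have "\<dots> = - (\<Sum>m=1..r div j. (-1) ^ m * (\<Sum>M\<in>?D (r - m * j). g (size M + Suc m)))"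
      unfolding sum_negf[symmetric]
      by (intro sum.cong refl) (auto simp: Suc_le_eq dest!: gr0_implies_Suc)
    finally show ?thesis
      unfolding \<open>n div j = Suc (r div j)\<close> split_first by (simp add: n)
  qed
qed

lemma Nq_0: "Nq 0 = 0"
  using restricted_partition_parts_bounded[of "{0<..}" _ 0]
  by (auto simp: Nq_def dist_partitions_def partitions_eq_restricted_partitions intro!: sum.neutral)

lemma Nq_recurrence:
  "int n * int (Nq n) =
    (\<Sum>k=1..n-1. int (Nq k) * sigma_s (n - k)) + (\<Sum>t=1..n. int t * tau_s t * int (q (n - t)))"
proof -
  let ?N = "\<lambda>r. int (Nq r)" and ?q = "\<lambda>r. int (q r)"
  have bounded: "set_mset M \<subseteq> {1..r} \<and> sum_mset M = r" if "M \<in> dist_partitions r" for M r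
    using that restricted_partition_parts_bounded[of "{0<..}" M r]
    by (auto simp: dist_partitions_def partitions_eq_restricted_partitions restricted_partitions_def)
  have count_size: "count M j * size M = (if j \<in># M then size M else 0)"
    if "M \<in> dist_partitions n" for M j
  proof -
    have "count M j \<le> 1"
      using that by (simp add: dist_partitions_def)
    then show ?thesis
      by (auto simp: le_Suc_eq simp flip: not_in_iff)
  qed
  have "n * Nq n = (\<Sum>j=1..n. j * (\<Sum>M\<in>dist_partitions n. count M j * size M))"
    unfolding Nq_def by (rule mult_sum_size_eq_sum_count) (rule bounded)
  also have "\<dots> = (\<Sum>j=1..n. j * (\<Sum>M\<in>{M \<in> dist_partitions n. j \<in># M}. size M))"
    by (simp add: count_size sum.inter_filter finite_dist_partitions)
  finally have "int (n * Nq n) = int (\<Sum>j=1..n. j * (\<Sum>M\<in>{M \<in> dist_partitions n. j \<in># M}. size M))"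
    by (rule arg_cong)
  then have "int n * ?N n = (\<Sum>j=1..n. int j * (\<Sum>M\<in>{M \<in> dist_partitions n. j \<in># M}. int (size M)))"
    by simp
  also have "\<dots> = (\<Sum>j=1..n. \<Sum>m=1..n div j.
      int j * ((-1) ^ (m - 1) * (?N (n - m * j) + int m * ?q (n - m * j))))"
    by (intro sum.cong refl)
      (simp add: sum_dist_partitions_containing sum_distrib_left sum.distrib Nq_def q_def mult.commute)
  also have "\<dots> = (\<Sum>k=1..n. \<Sum>d\<in>divisors k.
      (-1) ^ (k div d - 1) * int d * ?N (n - k) + int k * (-1) ^ (k div d - 1) * ?q (n - k))"
    unfolding sum_divisor_pairs
    by (intro sum.cong refl) (auto simp: divisors_def algebra_simps simp flip: of_nat_mult)
  also have "\<dots> = (\<Sum>k=1..n. sigma_s k * ?N (n - k) + int k * tau_s k * ?q (n - k))"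
    by (simp add: sigma_s_def tau_s_def sum.distrib sum_distrib_left sum_distrib_right mult.assoc)
  also have "\<dots> = (\<Sum>k=1..n-1. ?N k * sigma_s (n - k)) + (\<Sum>t=1..n. int t * tau_s t * ?q (n - t))"
    using sum_convolution_reflect[where N = ?N and s = sigma_s]
    by (simp add: sum.distrib Nq_0)
  finally show ?thesis .
qed

lemma Np_recurrence:
  "int n * int (Np n) =
    (\<Sum>k=1..n-1. int (Np k) * sigma (n - k)) + (\<Sum>t=1..n. int t * tau t * int (p (n - t)))"
proof -
  have "divisors k \<inter> {0<..} = divisors k" for k
    by (auto simp: divisors_def)
  then show ?thesis
    using arg_cong[OF total_parts_recurrence[of "{0<..}" n], of int]
    by (simp add: Np_def p_def sigma_def tau_def total_parts_def partitions_eq_restricted_partitions)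
qed

lemma divisors_inter_powers_of_two:
  assumes "0 < k"
  shows "divisors k \<inter> range ((^) 2) = (\<lambda>i. 2 ^ i) ` {..v2 k}"
proof -
  have "(2::nat) ^ i dvd k \<longleftrightarrow> i \<le> v2 k" for i
    unfolding v2_def using assms by (intro power_dvd_iff_le_multiplicity) auto
  with assms show ?thesis
    by (auto simp: divisors_def Suc_le_eq dest: dvd_imp_le)
qed

lemma inj_on_powers_of_two: "inj_on (\<lambda>i. (2::nat) ^ i) A"
  by (rule inj_onI) simp

lemma sum_divisors_powers_of_two:
  assumes "0 < k"
  shows "(\<Sum>d\<in>divisors k \<inter> range ((^) 2). int d) = 2 ^ (v2 k + 1) - 1"
proof -
  have "(\<Sum>i\<le>v. (2::int) ^ i) = 2 ^ (v + 1) - 1" for v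
    by (induction v) simp_all
  then show ?thesis
    by (simp add: divisors_inter_powers_of_two[OF assms] sum.reindex[OF inj_on_powers_of_two])
qed

lemma card_divisors_powers_of_two:
  assumes "0 < k"
  shows "card (divisors k \<inter> range ((^) 2)) = v2 k + 1"
  by (simp add: divisors_inter_powers_of_two[OF assms] card_image[OF inj_on_powers_of_two])

lemma Np_bin_recurrence:
  "int n * int (Np_bin n) =
    (\<Sum>k=1..n-1. int (Np_bin k) * (2 ^ (v2 (n - k) + 1) - 1))
    + (\<Sum>t=1..n. int t * int (v2 t + 1) * int (b (n - t)))"
proof -
  have "0 \<notin> range ((^) (2::nat))"
    by auto
  then have "int n * int (Np_bin n) =
      (\<Sum>k=1..n-1. int (Np_bin k) * (\<Sum>d\<in>divisors (n - k) \<inter> range ((^) 2). int d))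
      + (\<Sum>t=1..n. int t * int (card (divisors t \<inter> range ((^) 2))) * int (b (n - t)))"
    using arg_cong[OF total_parts_recurrence[of "range ((^) 2)" n], of int]
    by (simp add: Np_bin_def b_def total_parts_def bin_partitions_eq_restricted_partitions)
  also have "\<dots> = (\<Sum>k=1..n-1. int (Np_bin k) * (2 ^ (v2 (n - k) + 1) - 1))
      + (\<Sum>t=1..n. int t * int (v2 t + 1) * int (b (n - t)))"
  proof (intro arg_cong2[where f = "(+)"] sum.cong refl)
    fix k
    assume "k \<in> {1..n-1}"
    then have "0 < n - k"
      by auto
    then show "int (Np_bin k) * (\<Sum>d\<in>divisors (n - k) \<inter> range ((^) 2). int d)
        = int (Np_bin k) * (2 ^ (v2 (n - k) + 1) - 1)"
      by (simp only: sum_divisors_powers_of_two)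
  qed (simp add: card_divisors_powers_of_two)
  finally show ?thesis .
qed

theorem corollary9:
  fixes n :: nat
  assumes "0 < n"
  shows "(int n * int (Np n) =
           (\<Sum>k=1..n-1. int (Np k) * sigma (n - k)) + (\<Sum>t=1..n. int t * tau t * int (p (n - t)))) \<and>
         (int n * int (Nq n) =
           (\<Sum>k=1..n-1. int (Nq k) * sigma_s (n - k)) + (\<Sum>t=1..n. int t * tau_s t * int (q (n - t)))) \<and>
         (int n * int (Np_bin n) =
           (\<Sum>k=1..n-1. int (Np_bin k) * (2 ^ (v2 (n - k) + 1) - 1))
           + (\<Sum>t=1..n. int t * int (v2 t + 1) * int (b (n - t))))"
  \<comment> \<open>The recurrences hold for \<open>n = 0\<close> as well.\<close>
  using Np_recurrence Nq_recurrence Np_bin_recurrence by blast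

end
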